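(* Let $f$ be a DNF with $k$ terms and let $y\in\{0,1\}^n$ satisfy $f_{>\tau}$ and not $f_{\le\tau}$ ($\tau=1000k$). Fix any permutation $\pi$ and let $z_0,z_1,\dots$ be the sweep process started at $y$. Fix an index $i$ such that $(z_i)_a=y_a$ for all $a\in P(y)$, and let $U_i$ be the set of unanimous indices of $\mathcal{T}_f(z_i)$. Let $j\in[n]$ be such that some stripped term in $\mathcal{T}_f(z_i)\setminus(P(y)\cup U_i)$ contains a literal on $x_j$. Then $\pi(t)\neq j$ for all $t<i$.
   Context: Terms are sets of literals, a DNF is a set of terms; $g_{\le L}$ / $g_{>L}$ are the sub-DNFs of terms of length $\le L$ / $>L$. $\mathcal{T}_f(x)$ is the set of terms of $f$ satisfied by $x$. Protected set $P(y)$: for each term $T\in f$ not satisfied by $y$, take the literal of $T$ with smallest index not satisfied by $y$; $P(y)$ is the set of these indices. Stripped term: for a term $T$ and $S\subseteq[n]$, $T\setminus S$ removes from $T$ all literals $x_i,\overline{x_i}$ with $i\in S$; for a set of terms $\mathcal{T}$, $\mathcal{T}\setminus S=\{T\setminus S: T\in\mathcal{T}\}$. Unanimous indices of a set of terms $\mathcal{T}$: all $i\in[n]$ such that every term in $\mathcal{T}$ contains $x_i$, or every term in $\mathcal{T}$ contains $\overline{x_i}$. Sweep process: given $y$ with $f(y)=1$ and a permutation $\pi$ listing $[n]$ as $\pi(0),\dots,\pi(n-1)$, $z_0=y$, and $z_{t+1}=z_t^{\oplus\pi(t)}$ if $f(z_t^{\oplus\pi(t)})=1$, else $z_{t+1}=z_t$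 ($x^{\oplus j}$ is $x$ with bit $j$ flipped). *)

theory Defs
  imports Main
begin

text \<open>Points of {0,1}^n are
functions nat => bool (only coordinates 0..n-1 are relevant).\<close>

type_synonym lit = "nat \<times> bool"
type_synonym trm = "lit set"
type_synonym dnf = "trm set"

definition lit_sat :: "(nat \<Rightarrow> bool) \<Rightarrow> lit \<Rightarrow> bool" where
  "lit_sat x l \<longleftrightarrow> x (fst l) = snd l"

definition term_sat :: "(nat \<Rightarrow> bool) \<Rightarrow> trm \<Rightarrow> bool" where
  "term_sat x T \<longleftrightarrow> (\<forall>l\<in>T. lit_sat x l)"

definition dnf_eval :: "dnf \<Rightarrow> (nat \<Rightarrow> bool) \<Rightarrow> bool" where
  "dnf_eval f x \<longleftrightarrow> (\<exists>T\<in>f. term_sat x T)"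

definition is_dnf :: "nat \<Rightarrow> dnf \<Rightarrow> bool" where
  "is_dnf n f \<longleftrightarrow> finite f \<and> (\<forall>T\<in>f. \<forall>l\<in>T. fst l < n)"

definition term_len :: "trm \<Rightarrow> nat" where
  "term_len T = card T"

definition dnf_le :: "dnf \<Rightarrow> nat \<Rightarrow> dnf" where
  "dnf_le f L = {T\<in>f. term_len T \<le> L}"

definition dnf_gt :: "dnf \<Rightarrow> nat \<Rightarrow> dnf" where
  "dnf_gt f L = {T\<in>f. term_len T > L}"

definition sat_terms :: "dnf \<Rightarrow> (nat \<Rightarrow> bool) \<Rightarrow> trm set" where
  "sat_terms f x = {T\<in>f. term_sat x T}"

definition protected_set :: "dnf \<Rightarrow> (nat \<Rightarrow> bool) \<Rightarrow> nat set" where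
  "protected_set f y =
     {LEAST i. \<exists>b. (i, b) \<in> T \<and> \<not> lit_sat y (i, b) | T. T \<in> f \<and> \<not> term_sat y T}"

definition strip_term :: "trm \<Rightarrow> nat set \<Rightarrow> trm" where
  "strip_term T S = {l\<in>T. fst l \<notin> S}"

definition strip_terms :: "trm set \<Rightarrow> nat set \<Rightarrow> trm set" where
  "strip_terms \<T> S = (\<lambda>T. strip_term T S) ` \<T>"

definition unanimous :: "nat \<Rightarrow> trm set \<Rightarrow> nat set" where
  "unanimous n \<T> = {i. i < n \<and> ((\<forall>T\<in>\<T>. (i, True) \<in> T) \<or> (\<forall>T\<in>\<T>. (i, False) \<in> T))}"

definition flip :: "(nat \<Rightarrow> bool) \<Rightarrow> nat \<Rightarrow> (nat \<Rightarrow> bool)" where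
  "flip x j = x(j := \<not> x j)"

text \<open>Sweep process z_t for permutation \<pi> (listing [n] as \<pi> 0, ..., \<pi> (n-1)).\<close>
fun sweep :: "dnf \<Rightarrow> (nat \<Rightarrow> nat) \<Rightarrow> (nat \<Rightarrow> bool) \<Rightarrow> nat \<Rightarrow> (nat \<Rightarrow> bool)" where
  "sweep f \<pi> y 0 = y"
| "sweep f \<pi> y (Suc t) =
     (let z = sweep f \<pi> y t in
      if dnf_eval f (flip z (\<pi> t)) then flip z (\<pi> t) else z)"

end

theory Submission
  imports Defs
begin

text \<open>Every term satisfied by \<open>z\<^sub>i\<close> is already satisfied by \<open>y\<close>: otherwise its protected
index would carry a value of \<open>z\<^sub>i\<close> different from that of \<open>y\<close>. Since \<open>\<pi>\<close> is injective, each
coordinate is flipped at most once before time \<open>i\<close>, so every intermediate point \<open>z\<^sub>s\<close> agrees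
coordinatewise with \<open>y\<close> or with \<open>z\<^sub>i\<close>, and these terms are satisfied throughout the sweep.
If \<open>j\<close> is not unanimous, one of them avoids \<open>x\<^sub>j\<close> while another contains a literal on \<open>x\<^sub>j\<close>.
A sweep step at \<open>j\<close> before time \<open>i\<close> would therefore be accepted (the first term keeps \<open>f\<close> true)
and would falsify the second term, a contradiction.\<close>

lemma sweep_unchanged:
  assumes "m \<le> p" and "\<forall>r. m \<le> r \<and> r < p \<longrightarrow> \<pi> r \<noteq> a"
  shows "sweep f \<pi> y p a = sweep f \<pi> y m a"
  using assms
proof (induction p)
  case 0
  then show ?case by simp
next
  case (Suc p)
  show ?case
  proof (cases "m = Suc p")
    case False
    with Suc.prems have "m \<le> p" by simp
    with Suc.prems have "\<pi> p \<noteq> a" by simp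
    moreover have "sweep f \<pi> y p a = sweep f \<pi> y m a"
      using Suc.IH Suc.prems(2) \<open>m \<le> p\<close> by simp
    ultimately show ?thesis by (simp add: Let_def flip_def)
  qed simp
qed

lemma sweep_between_start_and_end:
  assumes "inj_on \<pi> {..<i}" and "s \<le> i"
  shows "sweep f \<pi> y s a = y a \<or> sweep f \<pi> y s a = sweep f \<pi> y i a"
proof (rule ccontr)
  assume neither: "\<not> ?thesis"
  obtain r1 where r1: "r1 < s" "\<pi> r1 = a"
    using sweep_unchanged[of 0 s \<pi> a f y] neither by auto
  obtain r2 where r2: "s \<le> r2" "r2 < i" "\<pi> r2 = a"
    using sweep_unchanged[of s i \<pi> a f y] neither assms(2) by auto
  have "r1 = r2"
    by (rule inj_onD[OF assms(1)]) (use r1 r2 assms(2) in auto)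
  with r1 r2 show False by simp
qed

lemma term_sat_of_agree_on_protected:
  assumes "\<forall>a\<in>protected_set f y. x a = y a" and "T \<in> f" and "term_sat x T"
  shows "term_sat y T"
proof (rule ccontr)
  assume unsat: "\<not> term_sat y T"
  define p where "p = (LEAST i. \<exists>b. (i, b) \<in> T \<and> \<not> lit_sat y (i, b))"
  have "\<exists>i b. (i, b) \<in> T \<and> \<not> lit_sat y (i, b)"
    using unsat by (auto simp: term_sat_def)
  then have "\<exists>b. (p, b) \<in> T \<and> \<not> lit_sat y (p, b)"
    unfolding p_def by (rule LeastI_ex)
  then obtain b where b: "(p, b) \<in> T" "\<not> lit_sat y (p, b)" by blast
  have "p \<in> protected_set f y"
    unfolding protected_set_def p_def using assms(2) unsat by blast
  with assms(1) have "x p = y p" by simp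
  with b assms(3) show False by (auto simp: term_sat_def lit_sat_def)
qed

lemma term_sat_of_pointwise_between:
  assumes "term_sat x T" and "term_sat y T" and "\<And>a. z a = x a \<or> z a = y a"
  shows "term_sat z T"
  using assms unfolding term_sat_def lit_sat_def by metis

lemma sweep_keeps_final_sat_terms:
  assumes "inj_on \<pi> {..<i}" and "\<forall>a\<in>protected_set f y. sweep f \<pi> y i a = y a"
    and "T \<in> sat_terms f (sweep f \<pi> y i)" and "s \<le> i"
  shows "term_sat (sweep f \<pi> y s) T"
proof -
  have "T \<in> f" "term_sat (sweep f \<pi> y i) T"
    using assms(3) by (auto simp: sat_terms_def)
  then have "term_sat y T"
    using term_sat_of_agree_on_protected assms(2) by blast
  from this \<open>term_sat (sweep f \<pi> y i) T\<close> sweep_between_start_and_end[OF assms(1,4)]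
  show ?thesis by (rule term_sat_of_pointwise_between)
qed

lemma exists_sat_term_avoiding_non_unanimous:
  assumes "T \<in> sat_terms f x" and "(j, b) \<in> T" and "j < n"
    and "j \<notin> unanimous n (sat_terms f x)"
  obtains S where "S \<in> sat_terms f x" and "\<forall>l\<in>S. fst l \<noteq> j"
proof -
  have "x j = b"
    using assms(1,2) by (auto simp: sat_terms_def term_sat_def lit_sat_def)
  obtain S where S: "S \<in> sat_terms f x" "(j, b) \<notin> S"
    using assms(3,4) unfolding unanimous_def by (cases b) auto
  have "(j, \<not> b) \<notin> S"
    using S(1) \<open>x j = b\<close> by (auto simp: sat_terms_def term_sat_def lit_sat_def)
  have "\<forall>l\<in>S. fst l \<noteq> j"
  proof (intro ballI notI)
    fix l assume "l \<in> S" and "fst l = j"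
    then have "(j, snd l) \<in> S" by (metis prod.collapse)
    with S(2) \<open>(j, \<not> b) \<notin> S\<close> show False by (cases "snd l = b") auto
  qed
  with S(1) show thesis by (rule that)
qed

lemma term_sat_flip_avoiding:
  assumes "\<forall>l\<in>T. fst l \<noteq> j"
  shows "term_sat (flip x j) T \<longleftrightarrow> term_sat x T"
proof -
  have "lit_sat (flip x j) l \<longleftrightarrow> lit_sat x l" if "l \<in> T" for l
    using assms that by (simp add: lit_sat_def flip_def)
  then show ?thesis
    unfolding term_sat_def by blast
qed

lemma not_term_sat_flip:
  assumes "term_sat x T" and "(j, b) \<in> T"
  shows "\<not> term_sat (flip x j) T"
proof -
  have "lit_sat x (j, b)"
    using assms unfolding term_sat_def by blast
  then have "\<not> lit_sat (flip x j) (j, b)"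
    unfolding lit_sat_def flip_def by (cases b) simp_all
  with assms(2) show ?thesis
    unfolding term_sat_def by blast
qed

lemma sweep_step_flips:
  assumes "S \<in> f" and "term_sat (sweep f \<pi> y t) S" and "\<forall>l\<in>S. fst l \<noteq> \<pi> t"
  shows "sweep f \<pi> y (Suc t) = flip (sweep f \<pi> y t) (\<pi> t)"
proof -
  have "dnf_eval f (flip (sweep f \<pi> y t) (\<pi> t))"
    using assms term_sat_flip_avoiding unfolding dnf_eval_def by blast
  then show ?thesis by (simp add: Let_def)
qed

theorem lemma4p8:
  fixes n k i j :: nat and f :: dnf and y :: "nat \<Rightarrow> bool" and \<pi> :: "nat \<Rightarrow> nat"
  assumes "is_dnf n f" and "card f = k"
    and "dnf_eval (dnf_gt f (1000 * k)) y"
    and "\<not> dnf_eval (dnf_le f (1000 * k)) y"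
    and "bij_betw \<pi> {0..<n} {0..<n}"
    and "i \<le> n"
    and "\<forall>a\<in>protected_set f y. sweep f \<pi> y i a = y a"
    and "\<exists>S\<in>strip_terms (sat_terms f (sweep f \<pi> y i))
            (protected_set f y \<union> unanimous n (sat_terms f (sweep f \<pi> y i))).
           \<exists>b. (j, b) \<in> S"
  shows "\<forall>t<i. \<pi> t \<noteq> j"
proof (intro allI impI notI)
  fix t assume "t < i" and "\<pi> t = j"
  let ?z = "sweep f \<pi> y"
  have "{..<i} \<subseteq> {0..<n}"
    using assms(6) by auto
  then have inj: "inj_on \<pi> {..<i}"
    using bij_betw_imp_inj_on[OF assms(5)] inj_on_subset by blast
  obtain T b where T: "T \<in> sat_terms f (?z i)" "(j, b) \<in> T"
    and non_unanimous: "j \<notin> unanimous n (sat_terms f (?z i))"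
    using assms(8) by (auto simp: strip_terms_def strip_term_def)
  have "fst (j, b) < n"
    using assms(1) T unfolding is_dnf_def sat_terms_def by blast
  then obtain S where S: "S \<in> sat_terms f (?z i)" "\<forall>l\<in>S. fst l \<noteq> j"
    using exists_sat_term_avoiding_non_unanimous[OF T _ non_unanimous] by auto
  note keeps = sweep_keeps_final_sat_terms[OF inj assms(7)]
  have "term_sat (?z t) S" "term_sat (?z t) T" "term_sat (?z (Suc t)) T"
    using keeps[OF S(1)] keeps[OF T(1)] \<open>t < i\<close> by (simp_all del: sweep.simps)
  moreover have "S \<in> f"
    using S(1) by (simp add: sat_terms_def)
  ultimately have "term_sat (flip (?z t) j) T"
    using sweep_step_flips[of S f \<pi> y t] S(2) \<open>\<pi> t = j\<close> by simp
  with not_term_sat_flip[OF \<open>term_sat (?z t) T\<close> T(2)] show False ..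
qed

end
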